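(* Let $n\in\mathbb N$, $w>0$, $\overrightarrow{P}=(p_1,\dots,p_n)$ with $1\le p_1\le\cdots\le p_n<\infty$, and let $\chi$ be a kernel. For $f\in\Delta^{\overrightarrow P}(\mathbb R^n)$ define the generalized sampling operator $S_w(f)(\mathbf x)=\sum_{\mathbf k\in\mathbb Z^n}f\big(\tfrac{\mathbf k}{w}\big)\chi(w\mathbf x-\mathbf k)$, $\mathbf x\in\mathbb R^n$. Then $S_w$ maps $\Delta^{\overrightarrow P}(\mathbb R^n)$ into $L^{\overrightarrow P}(\mathbb R^n)$ and $$\|S_wf\|_{\overrightarrow P}\le (m_0(\chi))^{1-\frac1{p_n}}\,\|\chi\|_1^{\frac1{p_n}}\,\Big\|\Big(f\big(\tfrac{\mathbf k}{w}\big)\Big)_{\mathbf k\in\mathbb Z^n}\Big\|_{\ell^{\overrightarrow P}_w}.$$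
   Context: A kernel is a function $\chi:\mathbb R^n\to\mathbb R$ with $\chi\in L^1(\mathbb R^n)$, bounded in a neighborhood of the origin, such that $\sum_{\mathbf k\in\mathbb Z^n}\chi(\mathbf u-\mathbf k)=1$ for every $\mathbf u\in\mathbb R^n$, and for a fixed $\alpha\ge0$ the absolute moment $m_\alpha(\chi):=\sup_{\mathbf u\in\mathbb R^n}\sum_{\mathbf k\in\mathbb Z^n}|\chi(\mathbf u-\mathbf k)|\,\|\mathbf u-\mathbf k\|_2^\alpha$ is finite; $m_0(\chi)=\sup_{\mathbf u}\sum_{\mathbf k}|\chi(\mathbf u-\mathbf k)|$. $L^{\overrightarrow P}(\mathbb R^n)$ is the space of measurable $f$ with $\|f\|_{\overrightarrow P}=\Big(\int_{\mathbb R}\cdots\Big(\int_{\mathbb R}\Big(\int_{\mathbb R}|f(x_1,\dots,x_n)|^{p_1}dx_1\Big)^{p_2/p_1}dx_2\Big)^{p_3/p_2}\cdots dx_n\Big)^{1/p_n}<\infty$. For a sequence $x$ on $\mathbb Z^n$, $\|x\|_{\ell^{\overrightarrow P}_w}=\Big(\frac1w\sum_{k_n}\cdots\Big(\frac1w\sum_{k_2}\Big(\frac1w\sum_{k_1}|x(k_1,\dots,k_n)|^{p_1}\Big)^{p_2/p_1}\Big)^{p_3/p_2}\cdots\Big)^{1/p_n}$. A countable set $\Gamma\subset\mathbb R^n$ is relatively separated with gap $\kappa>0$ if $1\le\inf_{\mathbf x}\sum_{\gamma\in\Gamma}\chi_{B(\gamma;\kappa/2)}(\mathbf x)$ and $\sup_{\mathbf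 x}\sum_{\gamma\in\Gamma}\chi_{B(\gamma;\kappa/2)}(\mathbf x)<\infty$, $B(\gamma;r)$ the open cube centered at $\gamma$ of side $2r$. $\Delta^{\overrightarrow P}(\mathbb R^n)$ is the set of bounded measurable $f:\mathbb R^n\to\mathbb R$ such that $\|(f(x_{\mathbf k}))_{\mathbf k\in\mathbb Z^n}\|_{\ell^{\overrightarrow P}_w}<\infty$ for every relatively separated set $(x_{\mathbf k})_{\mathbf k\in\mathbb Z^n}$. *)

theory Defs
  imports "HOL-Analysis.Analysis"
begin

text \<open>A point of R^n is a function x :: nat => real lying in
  PiE {..<n} (\<lambda>_. UNIV), i.e. coordinates x 0, ..., x (n-1) (coordinate i
  corresponds to x_(i+1) of the paper) and x i = undefined for i >= n.
  Lattice points of Z^n are likewise functions nat => int in PiE {..<n} (\<lambda>_. UNIV).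
  The exponent vector P = (p_1,...,p_n) is given by P 0, ..., P (n-1).\<close>

definition Rn :: "nat \<Rightarrow> (nat \<Rightarrow> real) set" where
  "Rn n = PiE {..<n} (\<lambda>_. UNIV)"

definition Zn :: "nat \<Rightarrow> (nat \<Rightarrow> int) set" where
  "Zn n = PiE {..<n} (\<lambda>_. UNIV)"

definition lebesgue_n :: "nat \<Rightarrow> (nat \<Rightarrow> real) measure" where
  "lebesgue_n n = completion (PiM {..<n} (\<lambda>_. lborel))"

definition epowr :: "ennreal \<Rightarrow> real \<Rightarrow> ennreal" where
  "epowr a p = (if p = 0 then 1 else if a = \<infinity> then \<infinity> else ennreal (enn2real a powr p))"

definition lat_div :: "nat \<Rightarrow> real \<Rightarrow> (nat \<Rightarrow> int) \<Rightarrow> (nat \<Rightarrow> real)" where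
  "lat_div n w k = restrict (\<lambda>i. real_of_int (k i) / w) {..<n}"

definition pt_minus :: "nat \<Rightarrow> (nat \<Rightarrow> real) \<Rightarrow> (nat \<Rightarrow> int) \<Rightarrow> (nat \<Rightarrow> real)" where
  "pt_minus n u k = restrict (\<lambda>i. u i - real_of_int (k i)) {..<n}"

definition pt_scale :: "nat \<Rightarrow> real \<Rightarrow> (nat \<Rightarrow> real) \<Rightarrow> (nat \<Rightarrow> real)" where
  "pt_scale n w x = restrict (\<lambda>i. w * x i) {..<n}"

definition norm2_n :: "nat \<Rightarrow> (nat \<Rightarrow> real) \<Rightarrow> real" where
  "norm2_n n x = sqrt (\<Sum>i<n. (x i)\<^sup>2)"

text \<open>Mixed Lebesgue norm ||f||_P (iterated integrals, innermost over x_1).\<close>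
fun mixnorm_aux :: "nat \<Rightarrow> (nat \<Rightarrow> real) \<Rightarrow> ((nat \<Rightarrow> real) \<Rightarrow> real) \<Rightarrow> nat \<Rightarrow> (nat \<Rightarrow> real) \<Rightarrow> ennreal" where
  "mixnorm_aux n P f 0 x = ennreal \<bar>f x\<bar>"
| "mixnorm_aux n P f (Suc j) x =
     epowr (\<integral>\<^sup>+ t. epowr (mixnorm_aux n P f j (x(j := t))) (P j) \<partial>lborel) (1 / P j)"

definition mixnorm :: "nat \<Rightarrow> (nat \<Rightarrow> real) \<Rightarrow> ((nat \<Rightarrow> real) \<Rightarrow> real) \<Rightarrow> ennreal" where
  "mixnorm n P f = mixnorm_aux n P f n (restrict (\<lambda>_. 0) {..<n})"

definition in_LP :: "nat \<Rightarrow> (nat \<Rightarrow> real) \<Rightarrow> ((nat \<Rightarrow> real) \<Rightarrow> real) \<Rightarrow> bool" where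
  "in_LP n P f \<longleftrightarrow> f \<in> borel_measurable (lebesgue_n n) \<and> mixnorm n P f < \<infinity>"

text \<open>Weighted mixed sequence norm ||x||_(l^P_w) (innermost sum over k_1).\<close>
fun seqnorm_aux :: "nat \<Rightarrow> (nat \<Rightarrow> real) \<Rightarrow> real \<Rightarrow> ((nat \<Rightarrow> int) \<Rightarrow> real) \<Rightarrow> nat \<Rightarrow> (nat \<Rightarrow> int) \<Rightarrow> ennreal" where
  "seqnorm_aux n P w a 0 k = ennreal \<bar>a k\<bar>"
| "seqnorm_aux n P w a (Suc j) k =
     epowr (ennreal (1 / w) * (\<integral>\<^sup>+ m. epowr (seqnorm_aux n P w a j (k(j := m))) (P j) \<partial>count_space UNIV)) (1 / P j)"

definition seqnorm :: "nat \<Rightarrow> (nat \<Rightarrow> real) \<Rightarrow> real \<Rightarrow> ((nat \<Rightarrow> int) \<Rightarrow> real) \<Rightarrow> ennreal" where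
  "seqnorm n P w a = seqnorm_aux n P w a n (restrict (\<lambda>_. 0) {..<n})"

definition cube :: "nat \<Rightarrow> (nat \<Rightarrow> real) \<Rightarrow> real \<Rightarrow> (nat \<Rightarrow> real) set" where
  "cube n g r = {y \<in> Rn n. \<forall>i<n. \<bar>y i - g i\<bar> < r}"

text \<open>A family (x_k)_{k in Z^n} is relatively separated (with some gap kappa > 0).
  The sum of indicator functions is the number of indices k with x in the cube.\<close>
definition rel_separated :: "nat \<Rightarrow> ((nat \<Rightarrow> int) \<Rightarrow> (nat \<Rightarrow> real)) \<Rightarrow> bool" where
  "rel_separated n X \<longleftrightarrow> (\<forall>k\<in>Zn n. X k \<in> Rn n) \<and>
     (\<exists>\<kappa>>0. (\<forall>x\<in>Rn n. 1 \<le> (\<integral>\<^sup>+ k. indicator (cube n (X k) (\<kappa>/2)) x \<partial>count_space (Zn n)))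
            \<and> (SUP x\<in>Rn n. (\<integral>\<^sup>+ k. indicator (cube n (X k) (\<kappa>/2)) x \<partial>count_space (Zn n))) < \<infinity>)"

definition Delta :: "nat \<Rightarrow> (nat \<Rightarrow> real) \<Rightarrow> real \<Rightarrow> ((nat \<Rightarrow> real) \<Rightarrow> real) \<Rightarrow> bool" where
  "Delta n P w f \<longleftrightarrow> f \<in> borel_measurable (lebesgue_n n) \<and>
     (\<exists>M. \<forall>x\<in>Rn n. \<bar>f x\<bar> \<le> M) \<and>
     (\<forall>X. rel_separated n X \<longrightarrow> seqnorm n P w (\<lambda>k. f (X k)) < \<infinity>)"

definition abs_moment :: "nat \<Rightarrow> real \<Rightarrow> ((nat \<Rightarrow> real) \<Rightarrow> real) \<Rightarrow> ennreal" where
  "abs_moment n \<alpha> K = (SUP u\<in>Rn n. (\<integral>\<^sup>+ k.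
      ennreal (\<bar>K (pt_minus n u k)\<bar> *
        (if \<alpha> = 0 then 1 else norm2_n n (pt_minus n u k) powr \<alpha>)) \<partial>count_space (Zn n)))"

definition is_kernel :: "nat \<Rightarrow> real \<Rightarrow> ((nat \<Rightarrow> real) \<Rightarrow> real) \<Rightarrow> bool" where
  "is_kernel n \<alpha> K \<longleftrightarrow>
     integrable (lebesgue_n n) K \<and>
     (\<exists>\<delta>>0. \<exists>M. \<forall>u\<in>Rn n. (\<forall>i<n. \<bar>u i\<bar> < \<delta>) \<longrightarrow> \<bar>K u\<bar> \<le> M) \<and>
     (\<forall>u\<in>Rn n. ((\<lambda>k. K (pt_minus n u k)) has_sum 1) (Zn n)) \<and>
     abs_moment n \<alpha> K < \<infinity>"

definition L1norm :: "nat \<Rightarrow> ((nat \<Rightarrow> real) \<Rightarrow> real) \<Rightarrow> ennreal" where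
  "L1norm n K = (\<integral>\<^sup>+ x. ennreal \<bar>K x\<bar> \<partial>lebesgue_n n)"

definition sampling :: "nat \<Rightarrow> real \<Rightarrow> ((nat \<Rightarrow> real) \<Rightarrow> real) \<Rightarrow> ((nat \<Rightarrow> real) \<Rightarrow> real) \<Rightarrow> (nat \<Rightarrow> real) \<Rightarrow> real" where
  "sampling n w K f x = (\<Sum>\<^sub>\<infinity> k\<in>Zn n. f (lat_div n w k) * K (pt_minus n (pt_scale n w x) k))"

end

theory Submission
  imports Defs
begin

text \<open>\<open>\<bar>S\<^sub>w f(x)\<bar>\<close> is dominated by \<open>H(x) = \<Sum>\<^sub>k \<bar>f(k/w)\<bar> \<bar>\<chi>(w x - k)\<bar>\<close>, whose mixed norm
  is computed by integrating out \<open>x\<^sub>1, \<dots>, x\<^sub>n\<close> one at a time. Before \<open>x\<^sub>j\<close> is integrated,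
  Jensen's inequality with the weights \<open>\<bar>\<chi>(w x - k)\<bar>\<close> (already integrated in
  \<open>x\<^sub>1, \<dots>, x\<^sub>j\<^sub>-\<^sub>1\<close>), whose sum over \<open>k\<close> is at most \<open>m\<^sub>0(\<chi>)\<close>, raises the exponent of the
  current bound from \<open>p\<^sub>j\<^sub>-\<^sub>1\<close> to \<open>p\<^sub>j\<close>; integrating \<open>x\<^sub>j\<close> then contributes the factor
  \<open>1/w\<close> and absorbs the sum over \<open>k\<^sub>j\<close> into the weighted sequence norm. After the last step
  the weights have become \<open>\<parallel>\<chi>\<parallel>\<^sub>1\<close>, so that \<open>\<parallel>H\<parallel>\<^sup>p \<le> m\<^sub>0(\<chi>)\<^sup>p\<^sup>-\<^sup>1 \<parallel>\<chi>\<parallel>\<^sub>1 \<parallel>(f(k/w))\<parallel>\<^sup>p\<close>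
  with \<open>p = p\<^sub>n\<close>.\<close>

section \<open>Powers in \<open>[0, \<infinity>]\<close>\<close>

lemma epowr_0 [simp]: "epowr a 0 = 1"
  by (simp add: epowr_def)

lemma epowr_1 [simp]: "epowr a 1 = a"
  by (cases a) (auto simp: epowr_def)

lemma epowr_zero_base: "p \<noteq> 0 \<Longrightarrow> epowr 0 p = 0"
  by (simp add: epowr_def)

lemma epowr_ennreal: "p \<noteq> 0 \<Longrightarrow> 0 \<le> c \<Longrightarrow> epowr (ennreal c) p = ennreal (c powr p)"
  by (simp add: epowr_def)

lemma epowr_less_top: "a < \<infinity> \<Longrightarrow> epowr a p < \<infinity>"
  by (simp add: epowr_def)

lemma epowr_epowr:
  assumes "p \<ge> 0" "q \<ge> 0"
  shows "epowr (epowr a p) q = epowr a (p * q)"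
  using assms by (cases a) (auto simp: epowr_def powr_powr)

lemma epowr_inverse_epowr: "p > 0 \<Longrightarrow> epowr (epowr a (1 / p)) p = a"
  by (subst epowr_epowr) auto

lemma epowr_epowr_inverse: "p > 0 \<Longrightarrow> epowr (epowr a p) (1 / p) = a"
  by (subst epowr_epowr) auto

lemma epowr_mono:
  assumes "a \<le> b" "p \<ge> 0"
  shows "epowr a p \<le> epowr b p"
  using assms
  by (cases a; cases b)
     (auto simp: epowr_def top_unique intro!: ennreal_leI powr_mono2)

lemma epowr_mult:
  assumes "p \<ge> 0"
  shows "epowr (a * b) p = epowr a p * epowr b p"
  using assms
  by (cases a; cases b)
     (auto simp: epowr_def powr_mult enn2real_mult ennreal_mult' ennreal_top_mult ennreal_mult_top
        ennreal_mult_eq_top_iff)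

lemma epowr_add:
  assumes "a \<noteq> \<infinity>" "p \<ge> 0" "q \<ge> 0"
  shows "epowr a (p + q) = epowr a p * epowr a q"
  using assms by (cases a) (auto simp: epowr_def powr_add ennreal_mult')

lemma borel_measurable_epowr [measurable]:
  "f \<in> borel_measurable M \<Longrightarrow> (\<lambda>x. epowr (f x) p) \<in> borel_measurable M"
  by (cases "p = 0") (simp_all add: epowr_def)

section \<open>Jensen's inequality for powers\<close>

lemma powr_tangent_le:
  fixes r x t :: real
  assumes r: "r > 1" and x: "x \<ge> 0" and t: "t \<ge> 0"
  shows "r * t powr (r - 1) * x \<le> x powr r + (r - 1) * t powr r"
proof -
  define q where "q = r / (r - 1)"
  have q: "q > 1" and pq: "1 / r + 1 / q = 1"
    using r by (auto simp: q_def field_simps)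
  have "x * t powr (r - 1) \<le> x powr r / r + (t powr (r - 1)) powr q / q"
    using Youngs_inequality[OF r q pq x] t by simp
  also have "(t powr (r - 1)) powr q = t powr r"
    using r t by (simp add: powr_powr q_def)
  finally have "r * (x * t powr (r - 1)) \<le> r * (x powr r / r + t powr r / q)"
    using r by (intro mult_left_mono) auto
  also have "\<dots> = x powr r + (r - 1) * t powr r"
    using r by (simp add: q_def field_simps)
  finally show ?thesis
    by (simp add: mult_ac)
qed

lemma ennreal_tangent_le:
  assumes r: "r > 1" and t: "t \<ge> 0"
  shows "ennreal (r * t powr (r - 1)) * c \<le> epowr c r + ennreal ((r - 1) * t powr r)"
proof (cases c)
  case (real x)
  have "ennreal (r * t powr (r - 1)) * ennreal x = ennreal (r * t powr (r - 1) * x)"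
    using r real by (simp add: ennreal_mult'')
  also have "\<dots> \<le> ennreal (x powr r + (r - 1) * t powr r)"
    using powr_tangent_le[OF r _ t] real by (intro ennreal_leI) simp
  also have "\<dots> = ennreal (x powr r) + ennreal ((r - 1) * t powr r)"
    using r by (intro ennreal_plus) auto
  finally show ?thesis
    using real r by (simp add: epowr_ennreal)
qed (use r in \<open>simp add: epowr_def\<close>)

lemma powr_le_of_tangent_bound:
  fixes r A T S :: real
  assumes r: "r > 1" and A: "A > 0" and T: "T \<ge> 0"
    and tangent: "r * (T / A) powr (r - 1) * T \<le> S + (r - 1) * (T / A) powr r * A"
  shows "T powr r \<le> A powr (r - 1) * S"
proof -
  define t where "t = T / A"
  have T_eq: "T = t * A" and "t \<ge> 0"
    using A T by (auto simp: t_def)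
  have "t powr (r - 1) * T = t powr r * A"
    using \<open>t \<ge> 0\<close> r by (cases "t = 0") (auto simp: T_eq powr_diff)
  moreover have "r * (t powr (r - 1) * T) \<le> S + (r - 1) * (t powr r * A)"
    using tangent by (simp add: t_def mult.assoc)
  ultimately have "t powr r * A \<le> S"
    by (simp add: left_diff_distrib)
  then have "A powr (r - 1) * (t powr r * A) \<le> A powr (r - 1) * S"
    by (intro mult_left_mono) auto
  moreover have "T powr r = A powr (r - 1) * (t powr r * A)"
    using \<open>t \<ge> 0\<close> A r by (simp add: T_eq powr_mult powr_diff field_simps)
  ultimately show ?thesis
    by simp
qed

lemma epowr_le_of_tangent_bound:
  fixes A T S M :: ennreal
  assumes r: "r > 1" and A: "A \<noteq> 0" "A \<le> M" and M: "M \<noteq> \<infinity>"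
    and tangent: "\<And>t. t \<ge> 0 \<Longrightarrow>
      ennreal (r * t powr (r - 1)) * T \<le> S + ennreal ((r - 1) * t powr r) * A"
  shows "epowr T r \<le> epowr M (r - 1) * S"
proof (cases "S = \<infinity>")
  case True
  have "M \<noteq> 0"
    using A by auto
  then have "epowr M (r - 1) \<noteq> 0"
    using M r by (cases M) (auto simp: epowr_def)
  then show ?thesis
    using True by (simp add: ennreal_mult_top)
next
  case False
  obtain Ar Sr Mr where Ar: "A = ennreal Ar" "Ar > 0" and Sr: "S = ennreal Sr" "Sr \<ge> 0"
    and Mr: "M = ennreal Mr" "Ar \<le> Mr"
    using A M False by (cases A; cases S; cases M) (auto simp: top_unique)
  have "ennreal r * T \<le> S + ennreal (r - 1) * A"
    using tangent[of 1] by simp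
  then have "T \<noteq> \<infinity>"
    using r Ar Sr by (auto simp: ennreal_mult_top ennreal_mult_eq_top_iff top_unique)
  then obtain Tr where Tr: "T = ennreal Tr" "Tr \<ge> 0"
    by (cases T) auto
  define t where "t = Tr / Ar"
  have "ennreal (r * t powr (r - 1) * Tr) \<le> ennreal (Sr + (r - 1) * t powr r * Ar)"
    using tangent[of t] Ar Sr Tr r
    by (simp add: t_def ennreal_mult'' ennreal_plus[symmetric] mult.assoc)
  then have "r * t powr (r - 1) * Tr \<le> Sr + (r - 1) * t powr r * Ar"
    using r Ar Sr by (subst (asm) ennreal_le_iff) auto
  then have "Tr powr r \<le> Ar powr (r - 1) * Sr"
    using powr_le_of_tangent_bound[OF r Ar(2) Tr(2)] by (simp add: t_def)
  also have "\<dots> \<le> Mr powr (r - 1) * Sr"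
    using Ar Sr Mr r by (intro mult_right_mono powr_mono2) auto
  finally have "ennreal (Tr powr r) \<le> ennreal (Mr powr (r - 1) * Sr)"
    by (rule ennreal_leI)
  then show ?thesis
    using Ar Mr Sr Tr r by (simp add: epowr_ennreal ennreal_mult'')
qed

text \<open>Jensen's inequality for \<open>c \<mapsto> c\<^sup>r\<close>: integrate the tangent line of \<open>c\<^sup>r\<close> at the
  weighted mean.\<close>
lemma nn_integral_epowr_le:
  fixes a c :: "'a \<Rightarrow> ennreal"
  assumes r: "r \<ge> 1" and [measurable]: "a \<in> borel_measurable N" "c \<in> borel_measurable N"
    and M: "M \<noteq> \<infinity>" and aM: "(\<integral>\<^sup>+x. a x \<partial>N) \<le> M"
  shows "epowr (\<integral>\<^sup>+x. c x * a x \<partial>N) r \<le> epowr M (r - 1) * (\<integral>\<^sup>+x. epowr (c x) r * a x \<partial>N)"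
proof (cases "r = 1")
  case False
  then have r1: "r > 1"
    using r by simp
  show ?thesis
  proof (cases "(\<integral>\<^sup>+x. a x \<partial>N) = 0")
    case True
    then have "AE x in N. a x = 0"
      by (simp add: nn_integral_0_iff_AE)
    then have "(\<integral>\<^sup>+x. c x * a x \<partial>N) = 0"
      by (subst nn_integral_0_iff_AE) (auto elim: AE_mp)
    then show ?thesis
      using r1 by (simp add: epowr_zero_base)
  next
    case False
    show ?thesis
    proof (rule epowr_le_of_tangent_bound[OF r1 False aM M])
      fix t :: real assume "t \<ge> 0"
      have "ennreal (r * t powr (r - 1)) * (\<integral>\<^sup>+x. c x * a x \<partial>N)
          = (\<integral>\<^sup>+x. ennreal (r * t powr (r - 1)) * c x * a x \<partial>N)"
        by (subst nn_integral_cmult[symmetric]) (auto simp: mult.assoc)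
      also have "\<dots> \<le> (\<integral>\<^sup>+x. epowr (c x) r * a x + ennreal ((r - 1) * t powr r) * a x \<partial>N)"
        using ennreal_tangent_le[OF r1 \<open>t \<ge> 0\<close>]
        by (intro nn_integral_mono) (metis distrib_right mult_right_mono zero_le)
      also have "\<dots> = (\<integral>\<^sup>+x. epowr (c x) r * a x \<partial>N) + ennreal ((r - 1) * t powr r) * (\<integral>\<^sup>+x. a x \<partial>N)"
        by (subst nn_integral_add) (auto simp: nn_integral_cmult)
      finally show "ennreal (r * t powr (r - 1)) * (\<integral>\<^sup>+x. c x * a x \<partial>N)
          \<le> (\<integral>\<^sup>+x. epowr (c x) r * a x \<partial>N) + ennreal ((r - 1) * t powr r) * (\<integral>\<^sup>+x. a x \<partial>N)" .
    qed
  qed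
qed simp

lemma epowr_bound_raise_exponent:
  fixes a c :: "'a \<Rightarrow> ennreal"
  assumes q: "1 \<le> q" "q \<le> p" and [measurable]: "a \<in> borel_measurable N" "c \<in> borel_measurable N"
    and M: "M \<noteq> \<infinity>" and aM: "(\<integral>\<^sup>+x. a x \<partial>N) \<le> M"
    and X: "epowr X q \<le> epowr M (q - 1) * (\<integral>\<^sup>+x. epowr (c x) q * a x \<partial>N)"
  shows "epowr X p \<le> epowr M (p - 1) * (\<integral>\<^sup>+x. epowr (c x) p * a x \<partial>N)"
proof -
  define r where "r = p / q"
  have r: "r \<ge> 1" and qr: "q * r = p"
    using q by (auto simp: r_def)
  have "epowr X p = epowr (epowr X q) r"
    using q r qr by (subst epowr_epowr) auto
  also have "\<dots> \<le> epowr (epowr M (q - 1) * (\<integral>\<^sup>+x. epowr (c x) q * a x \<partial>N)) r"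
    using X r by (intro epowr_mono) auto
  also have "\<dots> = epowr M ((q - 1) * r) * epowr (\<integral>\<^sup>+x. epowr (c x) q * a x \<partial>N) r"
    using q r by (simp add: epowr_mult epowr_epowr)
  also have "\<dots> \<le> epowr M ((q - 1) * r) * (epowr M (r - 1) * (\<integral>\<^sup>+x. epowr (epowr (c x) q) r * a x \<partial>N))"
    by (intro mult_left_mono nn_integral_epowr_le[OF r _ _ M aM]) auto
  also have "\<dots> = epowr M (p - 1) * (\<integral>\<^sup>+x. epowr (c x) p * a x \<partial>N)"
  proof -
    have "epowr M ((q - 1) * r) * epowr M (r - 1) = epowr M ((q - 1) * r + (r - 1))"
      using q r M by (intro epowr_add[symmetric]) auto
    also have "(q - 1) * r + (r - 1) = p - 1"
      using qr by (simp add: algebra_simps)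
    finally have "epowr M ((q - 1) * r) * epowr M (r - 1) = epowr M (p - 1)" .
    moreover have "epowr (epowr (c x) q) r = epowr (c x) p" for x
      using q r qr by (subst epowr_epowr) auto
    ultimately show ?thesis
      by (simp flip: mult.assoc)
  qed
  finally show ?thesis .
qed

section \<open>Iterated integrals on \<open>\<real>\<^sup>n\<close>\<close>

abbreviation lborel_n :: "nat \<Rightarrow> (nat \<Rightarrow> real) measure" where
  "lborel_n n \<equiv> PiM {..<n} (\<lambda>_. lborel)"

interpretation lborel_product: product_sigma_finite "\<lambda>_::nat. lborel :: real measure"
  by (simp add: product_sigma_finite_def lborel.sigma_finite_measure_axioms)

lemma space_lborel_n: "space (lborel_n n) = Rn n"
  by (simp add: space_PiM Rn_def)

lemma fun_upd_in_Rn: "u \<in> Rn n \<Longrightarrow> j < n \<Longrightarrow> u(j := s) \<in> Rn n"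
  by (auto simp: Rn_def PiE_def extensional_def)

lemma measurable_fun_upd_pair:
  "j < n \<Longrightarrow> (\<lambda>p. (fst p)(j := snd p)) \<in> lborel_n n \<Otimes>\<^sub>M lborel \<rightarrow>\<^sub>M lborel_n n"
  by (rule measurable_fun_upd[where J = "{..<n}"]) auto

lemma measurable_fun_upd_Rn:
  assumes "j < n" "u \<in> Rn n"
  shows "(\<lambda>s. u(j := s)) \<in> lborel \<rightarrow>\<^sub>M lborel_n n"
  using measurable_Pair2[OF measurable_fun_upd_pair[OF assms(1)], of u] assms(2)
  by (simp add: space_lborel_n)

fun iter_integral :: "((nat \<Rightarrow> real) \<Rightarrow> ennreal) \<Rightarrow> nat \<Rightarrow> (nat \<Rightarrow> real) \<Rightarrow> ennreal" where
  "iter_integral g 0 u = g u"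
| "iter_integral g (Suc j) u = (\<integral>\<^sup>+ s. iter_integral g j (u(j := s)) \<partial>lborel)"

lemma borel_measurable_iter_integral:
  assumes g: "g \<in> borel_measurable (lborel_n n)"
  shows "j \<le> n \<Longrightarrow> iter_integral g j \<in> borel_measurable (lborel_n n)"
proof (induction j)
  case 0
  have "iter_integral g 0 = g"
    by (rule ext) simp
  then show ?case
    using g by simp
next
  case (Suc j)
  then have j: "j < n"
    by simp
  have "(\<lambda>p. iter_integral g j ((fst p)(j := snd p))) \<in> borel_measurable (lborel_n n \<Otimes>\<^sub>M lborel)"
    using measurable_comp[OF measurable_fun_upd_pair[OF j] Suc.IH] j by (simp add: comp_def)
  then have "(\<lambda>u. \<integral>\<^sup>+ s. iter_integral g j (u(j := s)) \<partial>lborel) \<in> borel_measurable (lborel_n n)"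
    by (intro lborel.borel_measurable_nn_integral) (simp add: case_prod_beta')
  then show ?case
    by simp
qed

lemma iter_integral_fun_upd: "i < j \<Longrightarrow> iter_integral g j (u(i := s)) = iter_integral g j u"
proof (induction j arbitrary: u)
  case (Suc j)
  show ?case
  proof (cases "i = j")
    case False
    then have "i < j"
      using Suc.prems by simp
    have "iter_integral g j (u(i := s, j := t)) = iter_integral g j (u(j := t))" for t
      by (metis Suc.IH[OF \<open>i < j\<close>] False fun_upd_twist)
    then show ?thesis
      by (simp only: iter_integral.simps)
  qed (simp only: iter_integral.simps fun_upd_upd)
qed simp

lemma iter_integral_eq_PiM:
  assumes g: "g \<in> borel_measurable (lborel_n n)"
  shows "j \<le> n \<Longrightarrow> u \<in> Rn n \<Longrightarrow>
    iter_integral g j u = (\<integral>\<^sup>+ x. g (\<lambda>i. if i < j then x i else u i) \<partial>PiM {..<j} (\<lambda>_. lborel))"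
proof (induction j arbitrary: u)
  case 0
  then show ?case
    by (simp add: PiM_empty nn_integral_count_space_finite)
next
  case (Suc j)
  let ?mrg = "\<lambda>j x u i. if i < j then x i else u i"
  have "(\<lambda>x. ?mrg (Suc j) x u) \<in> PiM {..<Suc j} (\<lambda>_. lborel) \<rightarrow>\<^sub>M lborel_n n"
  proof (rule measurable_PiM_single')
    fix i
    show "(\<lambda>x. ?mrg (Suc j) x u i) \<in> PiM {..<Suc j} (\<lambda>_. lborel) \<rightarrow>\<^sub>M lborel"
      by (cases "i < Suc j") auto
  qed (use Suc.prems in \<open>auto simp: space_PiM Rn_def PiE_def extensional_def\<close>)
  then have meas: "(\<lambda>x. g (?mrg (Suc j) x u)) \<in> borel_measurable (PiM (insert j {..<j}) (\<lambda>_. lborel))"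
    using measurable_comp[OF _ g] by (simp add: comp_def lessThan_Suc)
  have "(\<integral>\<^sup>+ x. g (?mrg (Suc j) x u) \<partial>PiM {..<Suc j} (\<lambda>_. lborel))
      = (\<integral>\<^sup>+ y. (\<integral>\<^sup>+ x. g (?mrg (Suc j) (x(j := y)) u) \<partial>PiM {..<j} (\<lambda>_. lborel)) \<partial>lborel)"
    unfolding lessThan_Suc by (rule lborel_product.product_nn_integral_insert_rev[OF _ _ meas]) auto
  also have "\<dots> = (\<integral>\<^sup>+ y. iter_integral g j (u(j := y)) \<partial>lborel)"
  proof (rule nn_integral_cong)
    fix y
    have "?mrg (Suc j) (x(j := y)) u = ?mrg j x (u(j := y))" for x
      by (auto simp: fun_eq_iff)
    then show "(\<integral>\<^sup>+ x. g (?mrg (Suc j) (x(j := y)) u) \<partial>PiM {..<j} (\<lambda>_. lborel))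
        = iter_integral g j (u(j := y))"
      using Suc by (simp add: fun_upd_in_Rn)
  qed
  finally show ?case
    by simp
qed

lemma iter_integral_eq_nn_integral:
  assumes g: "g \<in> borel_measurable (lborel_n n)" and u: "u \<in> Rn n"
  shows "iter_integral g n u = (\<integral>\<^sup>+ x. g x \<partial>lborel_n n)"
proof -
  have "(\<lambda>i. if i < n then x i else u i) = x" if "x \<in> space (lborel_n n)" for x
    using that u by (auto simp: space_lborel_n Rn_def fun_eq_iff PiE_def extensional_def)
  then show ?thesis
    by (simp add: iter_integral_eq_PiM[OF g order_refl u] cong: nn_integral_cong)
qed

definition affine_pt :: "nat \<Rightarrow> real \<Rightarrow> (nat \<Rightarrow> real) \<Rightarrow> (nat \<Rightarrow> real) \<Rightarrow> (nat \<Rightarrow> real)" where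
  "affine_pt n c v x = restrict (\<lambda>i. c * x i - v i) {..<n}"

lemma affine_pt_in_Rn [simp]: "affine_pt n c v x \<in> Rn n"
  by (simp add: affine_pt_def Rn_def)

lemma affine_pt_shift_scale: "affine_pt n 1 v (affine_pt n c (\<lambda>_. 0) x) = affine_pt n c v x"
  by (auto simp: affine_pt_def fun_eq_iff)

lemma measurable_affine_pt [measurable]: "affine_pt n c v \<in> lborel_n n \<rightarrow>\<^sub>M lborel_n n"
  unfolding affine_pt_def by measurable

lemma affine_pt_fun_upd: "j < n \<Longrightarrow> affine_pt n c v (x(j := t)) = (affine_pt n c v x)(j := c * t - v j)"
  by (auto simp: affine_pt_def fun_eq_iff)

lemma measurable_affine_pt_fun_upd:
  assumes i: "i < n"
  shows "(\<lambda>s. affine_pt n c v (x(i := s))) \<in> lborel \<rightarrow>\<^sub>M lborel_n n"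
proof -
  have "(\<lambda>s. c * s - v i) \<in> lborel \<rightarrow>\<^sub>M lborel"
    by simp
  from measurable_comp[OF this measurable_fun_upd_Rn[OF i affine_pt_in_Rn]] show ?thesis
    by (simp add: comp_def affine_pt_fun_upd[OF i])
qed

lemma nn_integral_fun_upd_affine_pt:
  assumes j: "j < n" and G: "G \<in> borel_measurable (lborel_n n)" and c: "c > 0"
  shows "(\<integral>\<^sup>+ t. G (affine_pt n c v (x(j := t))) \<partial>lborel)
       = ennreal (1 / c) * (\<integral>\<^sup>+ s. G ((affine_pt n c v x)(j := s)) \<partial>lborel)"
proof -
  define F where "F s = G ((affine_pt n c v x)(j := s))" for s
  have "F \<in> borel_measurable lborel"
    unfolding F_def using measurable_fun_upd_Rn[OF j affine_pt_in_Rn] G by measurable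
  then have "(\<integral>\<^sup>+ s. F s \<partial>lborel) = ennreal c * (\<integral>\<^sup>+ s. F (- v j + c * s) \<partial>lborel)"
    using nn_integral_real_affine[of F c "- v j"] c by simp
  then have "ennreal (1 / c) * (\<integral>\<^sup>+ s. F s \<partial>lborel)
      = (ennreal (1 / c) * ennreal c) * (\<integral>\<^sup>+ s. F (- v j + c * s) \<partial>lborel)"
    by (simp add: mult.assoc)
  also have "ennreal (1 / c) * ennreal c = 1"
    using c by (simp add: ennreal_mult''[symmetric])
  finally show ?thesis
    using j by (simp add: F_def affine_pt_fun_upd)
qed

lemma borel_measurable_iter_integral_affine_pt_fun_upd:
  assumes "g \<in> borel_measurable (lborel_n n)" "j \<le> n" "i < n"
  shows "(\<lambda>t. iter_integral g j (affine_pt n c v (x(i := t)))) \<in> borel_measurable lborel"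
  using measurable_comp[OF measurable_affine_pt_fun_upd borel_measurable_iter_integral] assms
  by (simp add: comp_def)

lemma iter_integral_affine_pt:
  assumes g: "g \<in> borel_measurable (lborel_n n)" and c: "c > 0"
  shows "j \<le> n \<Longrightarrow>
    iter_integral (\<lambda>y. g (affine_pt n c v y)) j x = ennreal ((1 / c) ^ j) * iter_integral g j (affine_pt n c v x)"
proof (induction j arbitrary: x)
  case (Suc j)
  then have j: "j < n"
    by simp
  have "(\<lambda>t. iter_integral g j (affine_pt n c v (x(j := t)))) \<in> borel_measurable lborel"
    using borel_measurable_iter_integral_affine_pt_fun_upd[OF g _ j] j by simp
  then have "iter_integral (\<lambda>y. g (affine_pt n c v y)) (Suc j) x
      = ennreal ((1 / c) ^ j) * (\<integral>\<^sup>+ t. iter_integral g j (affine_pt n c v (x(j := t))) \<partial>lborel)"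
    using Suc j by (simp add: nn_integral_cmult)
  also have "\<dots> = ennreal ((1 / c) ^ j) * ennreal (1 / c) * iter_integral g (Suc j) (affine_pt n c v x)"
    using nn_integral_fun_upd_affine_pt[OF j borel_measurable_iter_integral[OF g] c] j
    by (simp add: mult.assoc)
  also have "ennreal ((1 / c) ^ j) * ennreal (1 / c) = ennreal ((1 / c) ^ Suc j)"
    using c by (simp add: ennreal_mult''[symmetric] power_Suc2 del: power_Suc)
  finally show ?case .
qed simp

lemma nn_integral_affine_pt:
  assumes g: "g \<in> borel_measurable (lborel_n n)" and c: "c > 0"
  shows "(\<integral>\<^sup>+ x. g (affine_pt n c v x) \<partial>lborel_n n) = ennreal ((1 / c) ^ n) * (\<integral>\<^sup>+ x. g x \<partial>lborel_n n)"
proof -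
  define u where "u = restrict (\<lambda>_. 0::real) {..<n}"
  have u: "u \<in> Rn n"
    by (simp add: u_def Rn_def)
  have "(\<lambda>y. g (affine_pt n c v y)) \<in> borel_measurable (lborel_n n)"
    using g by measurable
  then show ?thesis
    using iter_integral_affine_pt[OF g c order_refl, of v u]
    by (simp add: iter_integral_eq_nn_integral g u)
qed

lemma null_sets_vimage_affine_pt:
  assumes N: "N \<in> null_sets (lborel_n n)" and c: "c > 0"
  shows "affine_pt n c v -` N \<inter> Rn n \<in> null_sets (lborel_n n)"
proof -
  have N_sets: "N \<in> sets (lborel_n n)"
    using N by auto
  then have S: "affine_pt n c v -` N \<inter> Rn n \<in> sets (lborel_n n)"
    using measurable_sets[OF measurable_affine_pt] by (simp add: space_lborel_n)
  then have "emeasure (lborel_n n) (affine_pt n c v -` N \<inter> Rn n)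
      = (\<integral>\<^sup>+ x. indicator N (affine_pt n c v x) \<partial>lborel_n n)"
    by (auto simp: space_lborel_n indicator_def intro!: nn_integral_cong simp flip: nn_integral_indicator)
  also have "\<dots> = 0"
    using N N_sets by (simp add: nn_integral_affine_pt c null_setsD1)
  finally show ?thesis
    using S by (simp add: null_sets_def)
qed

fun mixnorm_enn :: "(nat \<Rightarrow> real) \<Rightarrow> ((nat \<Rightarrow> real) \<Rightarrow> ennreal) \<Rightarrow> nat \<Rightarrow> (nat \<Rightarrow> real) \<Rightarrow> ennreal" where
  "mixnorm_enn P g 0 x = g x"
| "mixnorm_enn P g (Suc j) x = epowr (\<integral>\<^sup>+ t. epowr (mixnorm_enn P g j (x(j := t))) (P j) \<partial>lborel) (1 / P j)"

lemma mixnorm_aux_eq_mixnorm_enn: "mixnorm_aux n P f j x = mixnorm_enn P (\<lambda>y. ennreal \<bar>f y\<bar>) j x"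
  by (induction j arbitrary: x) auto

lemma mixnorm_enn_mono_outside:
  assumes B: "B \<in> sets (lborel_n n)" and gh: "\<And>y. y \<in> Rn n \<Longrightarrow> y \<notin> B \<Longrightarrow> g y \<le> h y"
    and P: "\<And>i. i < n \<Longrightarrow> P i > 0"
  shows "j \<le> n \<Longrightarrow> x \<in> Rn n \<Longrightarrow> iter_integral (indicator B) j x = 0 \<Longrightarrow>
    mixnorm_enn P g j x \<le> mixnorm_enn P h j x"
proof (induction j arbitrary: x)
  case 0
  then show ?case
    using gh by (simp add: indicator_def split: if_splits)
next
  case (Suc j)
  then have j: "j < n" and Pj: "P j > 0"
    using P by auto
  have "(\<lambda>t. iter_integral (indicator B) j (x(j := t))) \<in> borel_measurable lborel"
    using measurable_comp[OF measurable_fun_upd_Rn[OF j Suc.prems(2)]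
        borel_measurable_iter_integral[of "indicator B" n j]] B j
    by (simp add: comp_def)
  then have "AE t in lborel. iter_integral (indicator B) j (x(j := t)) = 0"
    using Suc.prems(3) by (simp add: nn_integral_0_iff_AE)
  then have "AE t in lborel. epowr (mixnorm_enn P g j (x(j := t))) (P j) \<le> epowr (mixnorm_enn P h j (x(j := t))) (P j)"
    by eventually_elim (use Suc.IH j Pj Suc.prems(2) in \<open>simp add: epowr_mono fun_upd_in_Rn\<close>)
  then show ?case
    using Pj by (simp add: epowr_mono nn_integral_mono_AE)
qed

lemma mixnorm_enn_mono_AE:
  assumes gh: "AE y in lborel_n n. g y \<le> h y" and P: "\<And>i. i < n \<Longrightarrow> P i > 0" and x: "x \<in> Rn n"
  shows "mixnorm_enn P g n x \<le> mixnorm_enn P h n x"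
proof -
  obtain B where B: "{y \<in> space (lborel_n n). \<not> g y \<le> h y} \<subseteq> B" "B \<in> null_sets (lborel_n n)"
    using gh by (auto elim!: AE_E simp: null_sets_def)
  have "B \<in> sets (lborel_n n)"
    using B by auto
  then have "iter_integral (indicator B) n x = emeasure (lborel_n n) B"
    using x by (simp add: iter_integral_eq_nn_integral)
  also have "\<dots> = 0"
    using B by auto
  finally have "iter_integral (indicator B) n x = 0" .
  then show ?thesis
    using B by (intro mixnorm_enn_mono_outside[OF _ _ P order_refl x]) (auto simp: space_lborel_n)
qed

section \<open>Lattice sums\<close>

definition of_int_pt :: "(nat \<Rightarrow> int) \<Rightarrow> nat \<Rightarrow> real" where
  "of_int_pt k i = real_of_int (k i)"

definition lattice_tail :: "nat \<Rightarrow> nat \<Rightarrow> (nat \<Rightarrow> int) set" where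
  "lattice_tail n j = {k \<in> Zn n. \<forall>i<j. k i = 0}"

lemma lattice_tail_0 [simp]: "lattice_tail n 0 = Zn n"
  by (simp add: lattice_tail_def)

lemma lattice_tail_self: "lattice_tail n n = {restrict (\<lambda>_. 0) {..<n}}"
  by (auto simp: lattice_tail_def Zn_def PiE_def extensional_def fun_eq_iff)

lemma countable_Zn: "countable (Zn n)"
  unfolding Zn_def by (rule countable_PiE) auto

lemma countable_lattice_tail: "countable (lattice_tail n j)"
  by (rule countable_subset[OF _ countable_Zn]) (auto simp: lattice_tail_def)

lemma borel_measurable_nn_integral_count_space:
  assumes I: "countable I" and F: "\<And>i. i \<in> I \<Longrightarrow> F i \<in> borel_measurable M"
  shows "(\<lambda>x. \<integral>\<^sup>+ i. F i x \<partial>count_space I) \<in> borel_measurable M"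
proof -
  interpret I: sigma_finite_measure "count_space I"
    by (rule sigma_finite_measure_count_space_countable[OF I])
  have "(\<lambda>p. F (snd p) (fst p)) \<in> borel_measurable (M \<Otimes>\<^sub>M count_space I)"
    by (rule measurable_compose_countable'[where I = I]) (use I F in \<open>auto simp: measurable_fst''\<close>)
  then show ?thesis
    by (intro I.borel_measurable_nn_integral) (simp add: case_prod_beta')
qed

lemma nn_integral_lattice_tail_fun_upd:
  fixes F :: "(nat \<Rightarrow> int) \<Rightarrow> ennreal"
  assumes j: "j < n"
  shows "(\<integral>\<^sup>+ k. (\<integral>\<^sup>+ m. F (k(j := m)) \<partial>count_space UNIV) \<partial>count_space (lattice_tail n (Suc j)))
       = (\<integral>\<^sup>+ k. F k \<partial>count_space (lattice_tail n j))"
proof -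
  interpret sigma_finite_measure "count_space (UNIV :: int set)"
    by (rule sigma_finite_measure_count_space)
  have bij: "bij_betw (\<lambda>p. (fst p)(j := snd p)) (lattice_tail n (Suc j) \<times> UNIV) (lattice_tail n j)"
    by (rule bij_betwI[where g = "\<lambda>k. (k(j := 0), k j)"])
       (use j in \<open>auto simp: lattice_tail_def Zn_def PiE_def extensional_def less_Suc_eq\<close>)
  have "(\<integral>\<^sup>+ k. (\<integral>\<^sup>+ m. F (k(j := m)) \<partial>count_space UNIV) \<partial>count_space (lattice_tail n (Suc j)))
      = (\<integral>\<^sup>+ p. F ((fst p)(j := snd p)) \<partial>count_space (lattice_tail n (Suc j) \<times> UNIV))"
    using nn_integral_fst[of "\<lambda>p. F ((fst p)(j := snd p))" "count_space (lattice_tail n (Suc j))"]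
    by (simp add: pair_measure_countable countable_lattice_tail)
  also have "\<dots> = (\<integral>\<^sup>+ k. F k \<partial>count_space (lattice_tail n j))"
    by (rule nn_integral_bij_count_space[OF bij])
  finally show ?thesis .
qed

lemma nn_integral_lborel_periodize:
  fixes h :: "real \<Rightarrow> ennreal"
  assumes h [measurable]: "h \<in> borel_measurable lborel"
  shows "(\<integral>\<^sup>+ s. h s \<partial>lborel)
       = (\<integral>\<^sup>+ s. indicator {0..<1} s * (\<integral>\<^sup>+ m. h (s - real_of_int m) \<partial>count_space UNIV) \<partial>lborel)"
proof -
  have unit: "(\<integral>\<^sup>+ m. indicator {0..<1} (s + real_of_int m) * h s \<partial>count_space UNIV) = h s" for s
  proof -
    have "indicator {0..<1} (s + real_of_int m) = (indicator {- \<lfloor>s\<rfloor>} m :: ennreal)" for m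
      by (auto simp: indicator_def floor_eq_iff) linarith+
    then have "(\<integral>\<^sup>+ m. indicator {0..<1} (s + real_of_int m) * h s \<partial>count_space UNIV)
        = (\<integral>\<^sup>+ m. indicator {- \<lfloor>s\<rfloor>} m * h s \<partial>count_space UNIV)"
      by simp
    also have "\<dots> = h s"
      by (subst nn_integral_count_space'[where A = "{- \<lfloor>s\<rfloor>}"]) auto
    finally show ?thesis .
  qed
  have "(\<integral>\<^sup>+ s. h s \<partial>lborel)
      = (\<integral>\<^sup>+ m. (\<integral>\<^sup>+ s. indicator {0..<1} (s + real_of_int m) * h s \<partial>lborel) \<partial>count_space UNIV)"
    by (simp add: unit flip: nn_integral_count_space_nn_integral)
  also have "\<dots> = (\<integral>\<^sup>+ m. (\<integral>\<^sup>+ s. indicator {0..<1} s * h (s - real_of_int m) \<partial>lborel) \<partial>count_space UNIV)"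
  proof (rule nn_integral_cong)
    fix m :: int
    have "(\<lambda>s. indicator {0..<1} (s + real_of_int m) * h s :: ennreal) \<in> borel_measurable borel"
      by measurable
    from nn_integral_real_affine[OF this, of 1 "- real_of_int m"]
    show "(\<integral>\<^sup>+ s. indicator {0..<1} (s + real_of_int m) * h s \<partial>lborel)
        = (\<integral>\<^sup>+ s. indicator {0..<1} s * h (s - real_of_int m) \<partial>lborel)"
      by simp
  qed
  also have "\<dots> = (\<integral>\<^sup>+ s. indicator {0..<1} s * (\<integral>\<^sup>+ m. h (s - real_of_int m) \<partial>count_space UNIV) \<partial>lborel)"
    by (simp add: nn_integral_cmult flip: nn_integral_count_space_nn_integral)
  finally show ?thesis .
qed

text \<open>Splitting the line integral in the coordinate \<open>j\<close> into unit intervals trades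
  that coordinate of the integration for the \<open>j\<close>-th lattice coordinate.\<close>
lemma iter_integral_periodization_le:
  assumes g0: "g0 \<in> borel_measurable (lborel_n n)"
    and per: "\<And>u. u \<in> Rn n \<Longrightarrow> (\<integral>\<^sup>+ k. g0 (affine_pt n 1 (of_int_pt k) u) \<partial>count_space (Zn n)) \<le> M"
  shows "j \<le> n \<Longrightarrow> u \<in> Rn n \<Longrightarrow>
    (\<integral>\<^sup>+ k. iter_integral g0 j (affine_pt n 1 (of_int_pt k) u) \<partial>count_space (lattice_tail n j)) \<le> M"
proof (induction j arbitrary: u)
  case 0
  then show ?case
    using per by simp
next
  case (Suc j)
  then have j: "j < n" and u: "u \<in> Rn n"
    by auto
  let ?G = "\<lambda>k s. iter_integral g0 j (affine_pt n 1 (of_int_pt k) (u(j := s)))"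
  have G_meas: "?G k \<in> borel_measurable lborel" for k
    using borel_measurable_iter_integral_affine_pt_fun_upd[OF g0] j by simp
  have unit: "iter_integral g0 (Suc j) (affine_pt n 1 (of_int_pt k) u)
      = (\<integral>\<^sup>+ s. indicator {0..<1} s * (\<integral>\<^sup>+ m. ?G (k(j := m)) s \<partial>count_space UNIV) \<partial>lborel)" for k
  proof -
    have "(affine_pt n 1 (of_int_pt k) u)(j := s - real_of_int m) = affine_pt n 1 (of_int_pt (k(j := m))) (u(j := s))"
      for s m
      using j by (auto simp: affine_pt_def of_int_pt_def fun_eq_iff)
    moreover have "(\<lambda>s. iter_integral g0 j ((affine_pt n 1 (of_int_pt k) u)(j := s))) \<in> borel_measurable lborel"
      using measurable_comp[OF measurable_fun_upd_Rn[OF j affine_pt_in_Rn] borel_measurable_iter_integral[OF g0]] j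
      by (simp add: comp_def)
    ultimately show ?thesis
      by (simp add: nn_integral_lborel_periodize)
  qed
  have "(\<integral>\<^sup>+ k. iter_integral g0 (Suc j) (affine_pt n 1 (of_int_pt k) u) \<partial>count_space (lattice_tail n (Suc j)))
      = (\<integral>\<^sup>+ s. indicator {0..<1} s *
          (\<integral>\<^sup>+ k. (\<integral>\<^sup>+ m. ?G (k(j := m)) s \<partial>count_space UNIV) \<partial>count_space (lattice_tail n (Suc j))) \<partial>lborel)"
  proof -
    have "(\<lambda>s. indicator {0..<1} s * (\<integral>\<^sup>+ m. ?G (k(j := m)) s \<partial>count_space UNIV)) \<in> borel_measurable lborel"
      for k
      using G_meas
      by (intro borel_measurable_times_ennreal borel_measurable_nn_integral_count_space) auto
    then show ?thesis
      unfolding unit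
      by (subst nn_integral_count_space_nn_integral[symmetric])
         (auto simp: countable_lattice_tail nn_integral_cmult)
  qed
  also have "\<dots> = (\<integral>\<^sup>+ s. indicator {0..<1} s * (\<integral>\<^sup>+ k. ?G k s \<partial>count_space (lattice_tail n j)) \<partial>lborel)"
    using nn_integral_lattice_tail_fun_upd[OF j, of "\<lambda>k. ?G k _"] by (intro nn_integral_cong) simp
  also have "\<dots> \<le> (\<integral>\<^sup>+ s. indicator {0..<1::real} s * M \<partial>lborel)"
    using Suc.IH j u by (intro nn_integral_mono mult_left_mono) (auto simp: fun_upd_in_Rn)
  also have "\<dots> = M"
    by (simp add: nn_integral_multc)
  finally show ?case .
qed

definition lattice_sum ::
    "nat \<Rightarrow> real \<Rightarrow> ((nat \<Rightarrow> int) \<Rightarrow> ennreal) \<Rightarrow> ((nat \<Rightarrow> real) \<Rightarrow> ennreal) \<Rightarrow> (nat \<Rightarrow> real) \<Rightarrow> ennreal" where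
  "lattice_sum n w b g x = (\<integral>\<^sup>+ k. b k * g (affine_pt n w (of_int_pt k) x) \<partial>count_space (Zn n))"

fun seqnorm_enn :: "(nat \<Rightarrow> real) \<Rightarrow> real \<Rightarrow> ((nat \<Rightarrow> int) \<Rightarrow> ennreal) \<Rightarrow> nat \<Rightarrow> (nat \<Rightarrow> int) \<Rightarrow> ennreal" where
  "seqnorm_enn P w b 0 k = b k"
| "seqnorm_enn P w b (Suc j) k =
     epowr (ennreal (1 / w) * (\<integral>\<^sup>+ m. epowr (seqnorm_enn P w b j (k(j := m))) (P j) \<partial>count_space UNIV)) (1 / P j)"

lemma seqnorm_aux_eq_seqnorm_enn: "seqnorm_aux n P w a j k = seqnorm_enn P w (\<lambda>k. ennreal \<bar>a k\<bar>) j k"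
  by (induction j arbitrary: k) auto

lemma nn_integral_lattice_weighted_fun_upd:
  assumes g0: "g0 \<in> borel_measurable (lborel_n n)" and j: "j < n" and w: "w > 0"
  shows "(\<integral>\<^sup>+ t. (\<integral>\<^sup>+ k. E k * iter_integral g0 j (affine_pt n w (of_int_pt k) (x(j := t)))
              \<partial>count_space (lattice_tail n j)) \<partial>lborel)
    = (\<integral>\<^sup>+ k. ennreal (1 / w) * (\<integral>\<^sup>+ m. E (k(j := m)) \<partial>count_space UNIV) *
              iter_integral g0 (Suc j) (affine_pt n w (of_int_pt k) x) \<partial>count_space (lattice_tail n (Suc j)))"
proof -
  let ?I = "\<lambda>j k. iter_integral g0 j (affine_pt n w (of_int_pt k) x)"
  have "(\<integral>\<^sup>+ t. (\<integral>\<^sup>+ k. E k * iter_integral g0 j (affine_pt n w (of_int_pt k) (x(j := t)))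
              \<partial>count_space (lattice_tail n j)) \<partial>lborel)
      = (\<integral>\<^sup>+ k. E k * (\<integral>\<^sup>+ t. iter_integral g0 j (affine_pt n w (of_int_pt k) (x(j := t))) \<partial>lborel)
              \<partial>count_space (lattice_tail n j))"
    using borel_measurable_iter_integral_affine_pt_fun_upd[OF g0 _ j] j
    by (subst nn_integral_count_space_nn_integral) (auto simp: countable_lattice_tail nn_integral_cmult)
  also have "\<dots> = (\<integral>\<^sup>+ k. E k * (ennreal (1 / w) * ?I (Suc j) k) \<partial>count_space (lattice_tail n j))"
    using nn_integral_fun_upd_affine_pt[OF j borel_measurable_iter_integral[OF g0] w] j by simp
  also have "\<dots> = (\<integral>\<^sup>+ k. (\<integral>\<^sup>+ m. E (k(j := m)) * (ennreal (1 / w) * ?I (Suc j) (k(j := m)))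
              \<partial>count_space UNIV) \<partial>count_space (lattice_tail n (Suc j)))"
    by (rule nn_integral_lattice_tail_fun_upd[OF j, symmetric])
  also have "\<dots> = (\<integral>\<^sup>+ k. ennreal (1 / w) * (\<integral>\<^sup>+ m. E (k(j := m)) \<partial>count_space UNIV) * ?I (Suc j) k
              \<partial>count_space (lattice_tail n (Suc j)))"
  proof (rule nn_integral_cong)
    fix k
    have "affine_pt n w (of_int_pt (k(j := m))) x = (affine_pt n w (of_int_pt k) x)(j := w * x j - of_int m)" for m
      using j by (auto simp: affine_pt_def of_int_pt_def fun_eq_iff)
    then have "?I (Suc j) (k(j := m)) = ?I (Suc j) k" for m
      by (simp only: iter_integral_fun_upd lessI)
    then have "(\<integral>\<^sup>+ m. E (k(j := m)) * (ennreal (1 / w) * ?I (Suc j) (k(j := m))) \<partial>count_space UNIV)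
        = (\<integral>\<^sup>+ m. E (k(j := m)) \<partial>count_space UNIV) * (ennreal (1 / w) * ?I (Suc j) k)"
      by (simp only: nn_integral_multc borel_measurable_count_space)
    then show "(\<integral>\<^sup>+ m. E (k(j := m)) * (ennreal (1 / w) * ?I (Suc j) (k(j := m))) \<partial>count_space UNIV)
        = ennreal (1 / w) * (\<integral>\<^sup>+ m. E (k(j := m)) \<partial>count_space UNIV) * ?I (Suc j) k"
      by (simp only: ac_simps)
  qed
  finally show ?thesis .
qed

section \<open>The mixed-norm estimate for lattice sums\<close>

lemma exponent_ge_one:
  fixes P :: "nat \<Rightarrow> real"
  assumes P0: "1 \<le> P 0" and P_mono: "\<And>i. Suc i < n \<Longrightarrow> P i \<le> P (Suc i)" and i: "i < n"
  shows "1 \<le> P i"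
  using i
proof (induction i)
  case (Suc i)
  then have "1 \<le> P i"
    by simp
  then show ?case
    using P_mono[OF Suc.prems] by linarith
qed (use P0 in simp)

definition level_exponent :: "(nat \<Rightarrow> real) \<Rightarrow> nat \<Rightarrow> real" where
  "level_exponent P j = (if j = 0 then 1 else P (j - 1))"

text \<open>Before coordinate \<open>j\<close> is integrated, Jensen's inequality with the weights
  \<open>iter_integral g0 j (w x - k)\<close>, whose sum over the lattice is at most \<open>M\<close>, raises the
  exponent of the bound from \<open>P (j - 1)\<close> to \<open>P j\<close>.\<close>
lemma mixnorm_enn_lattice_sum_level_le:
  assumes g0: "g0 \<in> borel_measurable (lborel_n n)"
    and per: "\<And>u. u \<in> Rn n \<Longrightarrow> (\<integral>\<^sup>+ k. g0 (affine_pt n 1 (of_int_pt k) u) \<partial>count_space (Zn n)) \<le> M"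
    and M: "M \<noteq> \<infinity>" and w: "w > 0"
    and P0: "1 \<le> P 0" and P_mono: "\<And>i. Suc i < n \<Longrightarrow> P i \<le> P (Suc i)"
  shows "j \<le> n \<Longrightarrow> x \<in> Rn n \<Longrightarrow>
    epowr (mixnorm_enn P (lattice_sum n w b g0) j x) (level_exponent P j)
      \<le> epowr M (level_exponent P j - 1) *
        (\<integral>\<^sup>+ k. epowr (seqnorm_enn P w b j k) (level_exponent P j) *
                 iter_integral g0 j (affine_pt n w (of_int_pt k) x) \<partial>count_space (lattice_tail n j))"
proof (induction j arbitrary: x)
  case 0
  then show ?case
    by (simp add: level_exponent_def lattice_sum_def)
next
  case (Suc j)
  then have j: "j < n" and x: "x \<in> Rn n"
    by auto
  define p where "p = P j"
  have q: "1 \<le> level_exponent P j" "level_exponent P j \<le> p"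
    using exponent_ge_one[OF P0 P_mono] P_mono[of "j - 1"] j
    by (auto simp: level_exponent_def p_def)
  let ?H = "mixnorm_enn P (lattice_sum n w b g0) j"
  let ?I = "\<lambda>y k. iter_integral g0 j (affine_pt n w (of_int_pt k) y)"
  let ?E = "\<lambda>k. epowr (seqnorm_enn P w b j k) p"
  have raised: "epowr (?H y) p \<le> epowr M (p - 1) * (\<integral>\<^sup>+ k. ?E k * ?I y k \<partial>count_space (lattice_tail n j))"
    if y: "y \<in> Rn n" for y
  proof (rule epowr_bound_raise_exponent[OF q _ _ M])
    show "(\<integral>\<^sup>+ k. ?I y k \<partial>count_space (lattice_tail n j)) \<le> M"
      using iter_integral_periodization_le[OF g0 per, of j "affine_pt n w (\<lambda>_. 0) y"] j
      by (simp add: affine_pt_shift_scale)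
    show "epowr (?H y) (level_exponent P j) \<le> epowr M (level_exponent P j - 1) *
        (\<integral>\<^sup>+ k. epowr (seqnorm_enn P w b j k) (level_exponent P j) * ?I y k \<partial>count_space (lattice_tail n j))"
      using Suc.IH j y by simp
  qed auto
  have "epowr (mixnorm_enn P (lattice_sum n w b g0) (Suc j) x) p = (\<integral>\<^sup>+ t. epowr (?H (x(j := t))) p \<partial>lborel)"
    using exponent_ge_one[OF P0 P_mono j] by (simp add: p_def epowr_inverse_epowr)
  also have "\<dots> \<le> (\<integral>\<^sup>+ t. epowr M (p - 1) *
      (\<integral>\<^sup>+ k. ?E k * ?I (x(j := t)) k \<partial>count_space (lattice_tail n j)) \<partial>lborel)"
    using j x by (intro nn_integral_mono raised fun_upd_in_Rn)
  also have "\<dots> = epowr M (p - 1) *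
      (\<integral>\<^sup>+ t. (\<integral>\<^sup>+ k. ?E k * ?I (x(j := t)) k \<partial>count_space (lattice_tail n j)) \<partial>lborel)"
    using borel_measurable_iter_integral_affine_pt_fun_upd[OF g0 _ j] j
    by (intro nn_integral_cmult borel_measurable_nn_integral_count_space countable_lattice_tail) auto
  also have "\<dots> = epowr M (p - 1) *
      (\<integral>\<^sup>+ k. epowr (seqnorm_enn P w b (Suc j) k) p * iter_integral g0 (Suc j) (affine_pt n w (of_int_pt k) x)
        \<partial>count_space (lattice_tail n (Suc j)))"
    using exponent_ge_one[OF P0 P_mono j]
    by (simp only: nn_integral_lattice_weighted_fun_upd[OF g0 j w])
       (simp add: p_def epowr_inverse_epowr del: iter_integral.simps)
  finally show ?case
    by (simp add: level_exponent_def p_def)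
qed

lemma mixnorm_enn_lattice_sum_le:
  assumes g0: "g0 \<in> borel_measurable (lborel_n n)"
    and per: "\<And>u. u \<in> Rn n \<Longrightarrow> (\<integral>\<^sup>+ k. g0 (affine_pt n 1 (of_int_pt k) u) \<partial>count_space (Zn n)) \<le> M"
    and M: "M \<noteq> \<infinity>" and w: "w > 0"
    and P0: "1 \<le> P 0" and P_mono: "\<And>i. Suc i < n \<Longrightarrow> P i \<le> P (Suc i)"
    and n: "n \<ge> 1" and x: "x \<in> Rn n"
  shows "mixnorm_enn P (lattice_sum n w b g0) n x
    \<le> epowr M (1 - 1 / P (n - 1)) * epowr (\<integral>\<^sup>+ y. g0 y \<partial>lborel_n n) (1 / P (n - 1))
      * seqnorm_enn P w b n (restrict (\<lambda>_. 0) {..<n})"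
proof -
  define p where "p = P (n - 1)"
  define S where "S = seqnorm_enn P w b n (restrict (\<lambda>_. 0) {..<n})"
  define I where "I = (\<integral>\<^sup>+ y. g0 y \<partial>lborel_n n)"
  have p: "p \<ge> 1"
    using exponent_ge_one[OF P0 P_mono, where i = "n - 1"] n by (simp add: p_def)
  have "epowr (mixnorm_enn P (lattice_sum n w b g0) n x) p \<le> epowr M (p - 1) * (epowr S p * I)"
    using mixnorm_enn_lattice_sum_level_le[OF g0 per M w P0 P_mono order_refl x] n
    by (simp add: level_exponent_def p_def S_def I_def lattice_tail_self iter_integral_eq_nn_integral g0
        nn_integral_count_space_finite)
  then have "mixnorm_enn P (lattice_sum n w b g0) n x \<le> epowr (epowr M (p - 1) * (epowr S p * I)) (1 / p)"
    using p epowr_mono[of _ _ "1 / p"] epowr_epowr_inverse[of p] by fastforce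
  also have "\<dots> = epowr (epowr M (p - 1)) (1 / p) * (epowr (epowr S p) (1 / p) * epowr I (1 / p))"
    using p by (simp add: epowr_mult)
  also have "epowr (epowr M (p - 1)) (1 / p) = epowr M (1 - 1 / p)"
    using p by (subst epowr_epowr) (auto simp: field_simps)
  also have "epowr (epowr S p) (1 / p) = S"
    using p by (simp add: epowr_epowr_inverse)
  finally show ?thesis
    by (simp add: p_def S_def I_def mult_ac)
qed

section \<open>The kernel\<close>

lemma pt_minus_eq_affine_pt: "pt_minus n u k = affine_pt n 1 (of_int_pt k) u"
  by (simp add: pt_minus_def affine_pt_def of_int_pt_def)

lemma pt_minus_pt_scale: "pt_minus n (pt_scale n w x) k = affine_pt n w (of_int_pt k) x"
  by (simp add: pt_minus_def pt_scale_def affine_pt_def of_int_pt_def fun_eq_iff)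

lemma abs_moment_0_eq:
  "abs_moment n 0 K = (SUP u\<in>Rn n. \<integral>\<^sup>+ k. ennreal \<bar>K (affine_pt n 1 (of_int_pt k) u)\<bar> \<partial>count_space (Zn n))"
  by (simp add: abs_moment_def pt_minus_eq_affine_pt)

lemma nn_integral_lattice_translate:
  assumes k: "k \<in> Zn n"
  shows "(\<integral>\<^sup>+ k'. F (affine_pt n 1 (of_int_pt k') (affine_pt n 1 (of_int_pt k) u)) \<partial>count_space (Zn n))
       = (\<integral>\<^sup>+ k'. F (affine_pt n 1 (of_int_pt k') u) \<partial>count_space (Zn n))"
proof -
  let ?add = "\<lambda>k'. restrict (\<lambda>i. k i + k' i) {..<n}"
  have "bij_betw ?add (Zn n) (Zn n)"
    by (rule bij_betwI[where g = "\<lambda>k'. restrict (\<lambda>i. k' i - k i) {..<n}"])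
       (auto simp: Zn_def PiE_def extensional_def fun_eq_iff)
  moreover have "affine_pt n 1 (of_int_pt k') (affine_pt n 1 (of_int_pt k) u) = affine_pt n 1 (of_int_pt (?add k')) u"
    for k'
    by (auto simp: affine_pt_def of_int_pt_def fun_eq_iff)
  ultimately show ?thesis
    using nn_integral_bij_count_space[of ?add "Zn n" "Zn n" "\<lambda>k'. F (affine_pt n 1 (of_int_pt k') u)"]
    by simp
qed

lemma null_sets_lattice_preimages:
  assumes N: "N \<in> null_sets (lborel_n n)" and c: "c > 0"
  shows "(\<Union>k\<in>Zn n. affine_pt n c (of_int_pt k) -` N \<inter> Rn n) \<in> null_sets (lborel_n n)"
  using N c by (intro null_sets_UN' countable_Zn null_sets_vimage_affine_pt)

text \<open>A Borel representative of \<open>\<bar>K\<bar>\<close> is cut off to \<open>0\<close> on the lattice-invariant set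
  where its periodization exceeds \<open>m\<^sub>0(K)\<close>, so the bound holds everywhere.\<close>
lemma borel_abs_kernel_periodization_le:
  fixes K :: "(nat \<Rightarrow> real) \<Rightarrow> real"
  assumes K: "K \<in> borel_measurable (lebesgue_n n)"
  obtains G where "G \<in> borel_measurable (lborel_n n)"
    "AE u in lborel_n n. G u = ennreal \<bar>K u\<bar>"
    "\<And>u. u \<in> Rn n \<Longrightarrow> (\<integral>\<^sup>+ k. G (affine_pt n 1 (of_int_pt k) u) \<partial>count_space (Zn n)) \<le> abs_moment n 0 K"
proof -
  define M where "M = abs_moment n 0 K"
  obtain K' where K'[measurable]: "K' \<in> borel_measurable (lborel_n n)" and "AE x in lborel_n n. K x = K' x"
    using completion_ex_borel_measurable_real[OF K[unfolded lebesgue_n_def]] by blast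
  then obtain N where N: "N \<in> null_sets (lborel_n n)" and KK': "\<And>x. x \<in> Rn n \<Longrightarrow> x \<notin> N \<Longrightarrow> K x = K' x"
    by (force elim!: AE_E simp: null_sets_def space_lborel_n)
  define per where "per u = (\<integral>\<^sup>+ k. ennreal \<bar>K' (affine_pt n 1 (of_int_pt k) u)\<bar> \<partial>count_space (Zn n))" for u
  define G where "G u = (if per u \<le> M then ennreal \<bar>K' u\<bar> else 0)" for u
  have "per \<in> borel_measurable (lborel_n n)"
    unfolding per_def by (intro borel_measurable_nn_integral_count_space countable_Zn) measurable
  then have "G \<in> borel_measurable (lborel_n n)"
    unfolding G_def by measurable
  moreover
  define N' where "N' = (\<Union>k\<in>Zn n. affine_pt n 1 (of_int_pt k) -` N \<inter> Rn n)"
  have N': "N' \<in> null_sets (lborel_n n)"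
    unfolding N'_def by (rule null_sets_lattice_preimages[OF N]) simp
  have per_le: "per u \<le> M" if "u \<in> Rn n" "u \<notin> N'" for u
  proof -
    have "per u = (\<integral>\<^sup>+ k. ennreal \<bar>K (affine_pt n 1 (of_int_pt k) u)\<bar> \<partial>count_space (Zn n))"
      unfolding per_def using that by (intro nn_integral_cong) (auto simp: N'_def KK')
    also have "\<dots> \<le> M"
      unfolding M_def abs_moment_0_eq using that by (intro SUP_upper)
    finally show ?thesis .
  qed
  have not_N: "u \<notin> N" if "u \<in> Rn n" "u \<notin> N'" for u
  proof -
    have "restrict (\<lambda>_. 0) {..<n} \<in> Zn n"
      by (simp add: Zn_def)
    moreover have "affine_pt n 1 (of_int_pt (restrict (\<lambda>_. 0) {..<n})) u = u"
      using that(1) by (auto simp: affine_pt_def of_int_pt_def Rn_def PiE_def extensional_def fun_eq_iff)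
    ultimately show ?thesis
      using that unfolding N'_def by force
  qed
  have "AE u in lborel_n n. G u = ennreal \<bar>K u\<bar>"
  proof (rule AE_I')
    show "{u \<in> space (lborel_n n). G u \<noteq> ennreal \<bar>K u\<bar>} \<subseteq> N'"
      using per_le not_N KK' by (force simp: G_def space_lborel_n)
  qed (rule N')
  moreover have "(\<integral>\<^sup>+ k. G (affine_pt n 1 (of_int_pt k) u) \<partial>count_space (Zn n)) \<le> M" if "u \<in> Rn n" for u
  proof -
    have per_shift: "per (affine_pt n 1 (of_int_pt k) u) = per u" if "k \<in> Zn n" for k
      unfolding per_def using that by (rule nn_integral_lattice_translate)
    show ?thesis
    proof (cases "per u \<le> M")
      case True
      then have "(\<integral>\<^sup>+ k. G (affine_pt n 1 (of_int_pt k) u) \<partial>count_space (Zn n)) = per u"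
        unfolding per_def G_def by (intro nn_integral_cong) (simp add: per_shift[unfolded per_def])
      then show ?thesis
        using True by simp
    next
      case False
      then have "(\<integral>\<^sup>+ k. G (affine_pt n 1 (of_int_pt k) u) \<partial>count_space (Zn n))
          = (\<integral>\<^sup>+ k. 0 \<partial>count_space (Zn n))"
        unfolding G_def by (intro nn_integral_cong) (auto simp: per_shift)
      then show ?thesis
        by simp
    qed
  qed
  ultimately show ?thesis
    using that unfolding M_def by blast
qed

lemma abs_le_norm2_n: "i < n \<Longrightarrow> \<bar>x i\<bar> \<le> norm2_n n x"
  unfolding norm2_n_def by (rule real_le_rsqrt) (auto intro: member_le_sum)

lemma lattice_points_near_le_one:
  assumes d: "d \<le> 1 / 2"
  shows "(\<integral>\<^sup>+ k. indicator {k. \<forall>i<n. \<bar>affine_pt n 1 (of_int_pt k) u i\<bar> < d} k \<partial>count_space (Zn n)) \<le> 1"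
proof -
  let ?S = "{k \<in> Zn n. \<forall>i<n. \<bar>affine_pt n 1 (of_int_pt k) u i\<bar> < d}"
  have unique: "k = k'" if "k \<in> ?S" "k' \<in> ?S" for k k'
  proof
    fix i
    show "k i = k' i"
    proof (cases "i < n")
      case True
      then have "\<bar>u i - k i\<bar> < 1 / 2" "\<bar>u i - k' i\<bar> < 1 / 2"
        using that d by (auto simp: affine_pt_def of_int_pt_def)
      then show ?thesis
        by linarith
    qed (use that in \<open>auto simp: Zn_def PiE_def extensional_def\<close>)
  qed
  have "(\<integral>\<^sup>+ k. indicator {k. \<forall>i<n. \<bar>affine_pt n 1 (of_int_pt k) u i\<bar> < d} k \<partial>count_space (Zn n))
      = (\<integral>\<^sup>+ k. of_bool (k \<in> ?S) \<partial>count_space (Zn n))"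
    by (intro nn_integral_cong) (auto simp: indicator_def)
  also have "\<dots> = of_bool (\<exists>k\<in>Zn n. k \<in> ?S)"
    using unique by (intro of_bool_Bex_eq_nn_integral[symmetric]) auto
  also have "\<dots> \<le> 1"
    by simp
  finally show ?thesis .
qed

text \<open>Near the lattice point closest to \<open>u\<close> the kernel is bounded; away from it the
  weight \<open>\<parallel>u - k\<parallel>\<^sup>\<alpha>\<close> is bounded below.\<close>
lemma abs_moment_0_finite:
  fixes K :: "(nat \<Rightarrow> real) \<Rightarrow> real"
  assumes \<alpha>: "\<alpha> \<ge> 0" and \<delta>: "\<delta> > 0"
    and bnd: "\<And>u. u \<in> Rn n \<Longrightarrow> (\<forall>i<n. \<bar>u i\<bar> < \<delta>) \<Longrightarrow> \<bar>K u\<bar> \<le> B"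
    and fin: "abs_moment n \<alpha> K < \<infinity>"
  shows "abs_moment n 0 K < \<infinity>"
proof (cases "\<alpha> = 0")
  case False
  then have \<alpha>: "\<alpha> > 0"
    using \<alpha> by simp
  define d where "d = min \<delta> (1 / 2)"
  have d: "d > 0" "d \<le> \<delta>" "d \<le> 1 / 2"
    using \<delta> by (auto simp: d_def)
  define C where "C = ennreal (max B 0) + ennreal (1 / d powr \<alpha>) * abs_moment n \<alpha> K"
  have "(\<integral>\<^sup>+ k. ennreal \<bar>K (affine_pt n 1 (of_int_pt k) u)\<bar> \<partial>count_space (Zn n)) \<le> C"
    if u: "u \<in> Rn n" for u
  proof -
    let ?v = "\<lambda>k. affine_pt n 1 (of_int_pt k) u"
    let ?near = "{k. \<forall>i<n. \<bar>?v k i\<bar> < d}"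
    have pointwise: "ennreal \<bar>K (?v k)\<bar> \<le> ennreal (max B 0) * indicator ?near k
        + ennreal (1 / d powr \<alpha>) * ennreal (\<bar>K (?v k)\<bar> * norm2_n n (?v k) powr \<alpha>)" for k
    proof (cases "k \<in> ?near")
      case True
      then have "\<bar>K (?v k)\<bar> \<le> max B 0"
        using bnd[of "?v k"] d by fastforce
      then show ?thesis
        using True by (simp add: add_increasing2 ennreal_leI)
    next
      case False
      then obtain i where "i < n" "d \<le> \<bar>?v k i\<bar>"
        by (auto simp: not_less)
      then have "d powr \<alpha> \<le> norm2_n n (?v k) powr \<alpha>"
        using abs_le_norm2_n[of i n "?v k"] d \<alpha> by (intro powr_mono2) auto
      then have "d powr \<alpha> * \<bar>K (?v k)\<bar> \<le> norm2_n n (?v k) powr \<alpha> * \<bar>K (?v k)\<bar>"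
        by (rule mult_right_mono) simp
      then have "\<bar>K (?v k)\<bar> \<le> 1 / d powr \<alpha> * (\<bar>K (?v k)\<bar> * norm2_n n (?v k) powr \<alpha>)"
        using d by (simp add: field_simps mult.commute)
      then show ?thesis
        using False by (simp add: ennreal_mult''[symmetric] ennreal_leI add_increasing)
    qed
    have "(\<integral>\<^sup>+ k. ennreal \<bar>K (?v k)\<bar> \<partial>count_space (Zn n))
        \<le> ennreal (max B 0) * (\<integral>\<^sup>+ k. indicator ?near k \<partial>count_space (Zn n))
          + ennreal (1 / d powr \<alpha>) * (\<integral>\<^sup>+ k. ennreal (\<bar>K (?v k)\<bar> * norm2_n n (?v k) powr \<alpha>) \<partial>count_space (Zn n))"
      using pointwise by (subst nn_integral_cmult[symmetric] nn_integral_add[symmetric], simp_all)+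
        (intro nn_integral_mono, simp)
    also have "\<dots> \<le> ennreal (max B 0) * 1 + ennreal (1 / d powr \<alpha>) * abs_moment n \<alpha> K"
      using u \<alpha>
      by (intro add_mono mult_left_mono lattice_points_near_le_one[OF d(3)])
         (auto simp: abs_moment_def pt_minus_eq_affine_pt intro!: SUP_upper2[OF u])
    also have "\<dots> = C"
      by (simp add: C_def)
    finally show ?thesis .
  qed
  then have "abs_moment n 0 K \<le> C"
    unfolding abs_moment_0_eq by (intro SUP_least)
  also have "C < \<infinity>"
    using fin by (simp add: C_def ennreal_mult_less_top)
  finally show ?thesis .
qed (use fin in simp)

section \<open>The sampling operator\<close>

lemma measurable_lebesgue_n_affine_pt:
  assumes c: "c > 0"
  shows "affine_pt n c v \<in> lebesgue_n n \<rightarrow>\<^sub>M lebesgue_n n"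
  unfolding lebesgue_n_def
proof (rule completion.measurable_completion2)
  show "affine_pt n c v \<in> completion (lborel_n n) \<rightarrow>\<^sub>M lborel_n n"
    by (rule measurable_completion) simp
  show "null_sets (lborel_n n) \<subseteq> null_sets (distr (completion (lborel_n n)) (lborel_n n) (affine_pt n c v))"
  proof
    fix N assume N: "N \<in> null_sets (lborel_n n)"
    then have "affine_pt n c v -` N \<inter> Rn n \<in> null_sets (lborel_n n)"
      using c by (rule null_sets_vimage_affine_pt)
    then show "N \<in> null_sets (distr (completion (lborel_n n)) (lborel_n n) (affine_pt n c v))"
      using N by (auto simp: null_sets_def emeasure_distr measurable_completion space_lborel_n)
  qed
qed

lemma infsum_abs_le_nn_integral:
  fixes g :: "'a \<Rightarrow> real"
  shows "ennreal \<bar>infsum g A\<bar> \<le> (\<integral>\<^sup>+ k. ennreal \<bar>g k\<bar> \<partial>count_space A)"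
proof (cases "(\<integral>\<^sup>+ k. ennreal \<bar>g k\<bar> \<partial>count_space A) < top")
  case True
  then have int: "integrable (count_space A) g"
    by (simp add: integrable_iff_bounded)
  then have "infsum g A = integral\<^sup>L (count_space A) g"
    by (simp add: infsetsum_infsum[symmetric] Infinite_Set_Sum.abs_summable_on_def infsetsum_def)
  then have "\<bar>infsum g A\<bar> \<le> integral\<^sup>L (count_space A) (\<lambda>k. \<bar>g k\<bar>)"
    using integral_norm_bound[of "count_space A" g] by simp
  also have "\<dots> = enn2real (\<integral>\<^sup>+ k. ennreal \<bar>g k\<bar> \<partial>count_space A)"
    using int by (simp add: integral_eq_nn_integral)
  finally have "ennreal \<bar>infsum g A\<bar> \<le> ennreal (enn2real (\<integral>\<^sup>+ k. ennreal \<bar>g k\<bar> \<partial>count_space A))"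
    by (rule ennreal_leI)
  also have "\<dots> = (\<integral>\<^sup>+ k. ennreal \<bar>g k\<bar> \<partial>count_space A)"
    using True by (rule ennreal_enn2real)
  finally show ?thesis .
qed (simp add: not_less top_unique)

lemma infsum_eq_nn_integral_diff:
  fixes g :: "'a \<Rightarrow> real"
  assumes "(\<integral>\<^sup>+ k. ennreal \<bar>g k\<bar> \<partial>count_space A) < \<infinity>"
  shows "infsum g A
    = enn2real (\<integral>\<^sup>+ k. ennreal (g k) \<partial>count_space A) - enn2real (\<integral>\<^sup>+ k. ennreal (- g k) \<partial>count_space A)"
proof -
  have "integrable (count_space A) g"
    using assms by (simp add: integrable_iff_bounded)
  then show ?thesis
    by (simp add: infsetsum_infsum[symmetric] Infinite_Set_Sum.abs_summable_on_def infsetsum_def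
        real_lebesgue_integral_def)
qed

lemma lat_div_in_Rn: "lat_div n w k \<in> Rn n"
  by (simp add: lat_div_def Rn_def)

lemma mem_cube_lat_div_iff:
  assumes w: "w > 0"
  shows "x \<in> cube n (lat_div n w k) (1 / w) \<longleftrightarrow> x \<in> Rn n \<and> (\<forall>i<n. \<bar>w * x i - k i\<bar> < 1)"
proof -
  have "\<bar>x i - real_of_int (k i) / w\<bar> < 1 / w \<longleftrightarrow> \<bar>w * x i - k i\<bar> < 1" for i
  proof -
    have "\<bar>x i - real_of_int (k i) / w\<bar> = \<bar>w * x i - k i\<bar> / w"
      using w by (simp add: field_simps abs_div_pos[symmetric])
    then show ?thesis
      using w by (simp add: divide_less_cancel)
  qed
  then show ?thesis
    by (auto simp: cube_def lat_div_def)
qed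

lemma one_le_lattice_cube_count:
  assumes w: "w > 0" and x: "x \<in> Rn n"
  shows "1 \<le> (\<integral>\<^sup>+ k. indicator (cube n (lat_div n w k) (1 / w)) x \<partial>count_space (Zn n))"
proof -
  define k where "k = restrict (\<lambda>i. round (w * x i)) {..<n}"
  have k: "k \<in> Zn n"
    by (simp add: k_def Zn_def)
  have "\<bar>w * x i - k i\<bar> < 1" if "i < n" for i
    using that of_int_round_abs_le[of "w * x i"] by (simp add: k_def abs_minus_commute)
  then have "x \<in> cube n (lat_div n w k) (1 / w)"
    using x by (simp add: mem_cube_lat_div_iff[OF w])
  then have "(\<integral>\<^sup>+ k'. indicator {k} k' \<partial>count_space (Zn n))
      \<le> (\<integral>\<^sup>+ k'. indicator (cube n (lat_div n w k') (1 / w)) x \<partial>count_space (Zn n))"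
    by (intro nn_integral_mono) (auto simp: indicator_def)
  moreover have "(\<integral>\<^sup>+ k'. indicator {k} k' \<partial>count_space (Zn n)) = 1"
    using k by (subst nn_integral_count_space'[where A = "{k}"]) auto
  ultimately show ?thesis
    by simp
qed

lemma lattice_cube_count_le:
  assumes w: "w > 0"
  shows "(\<integral>\<^sup>+ k. indicator (cube n (lat_div n w k) (1 / w)) x \<partial>count_space (Zn n)) \<le> of_nat (3 ^ n)"
proof -
  define T where "T = PiE {..<n} (\<lambda>i. {\<lfloor>w * x i\<rfloor> - 1 .. \<lfloor>w * x i\<rfloor> + 1})"
  have T: "finite T" "T \<subseteq> Zn n" "card T = 3 ^ n"
    by (auto simp: T_def Zn_def card_PiE intro!: finite_PiE)
  have "k \<in> T" if "k \<in> Zn n" "x \<in> cube n (lat_div n w k) (1 / w)" for k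
  proof -
    have "k i \<in> {\<lfloor>w * x i\<rfloor> - 1 .. \<lfloor>w * x i\<rfloor> + 1}" if "\<bar>w * x i - k i\<bar> < 1" for i
    proof -
      have "\<lfloor>w * x i\<rfloor> \<le> k i + 1"
        unfolding floor_le_iff using that by simp
      moreover have "k i - 1 \<le> \<lfloor>w * x i\<rfloor>"
        unfolding le_floor_iff using that by simp
      ultimately show ?thesis
        by simp
    qed
    then show ?thesis
      using that by (auto simp: T_def Zn_def PiE_def mem_cube_lat_div_iff[OF w])
  qed
  then have "(\<integral>\<^sup>+ k. indicator (cube n (lat_div n w k) (1 / w)) x \<partial>count_space (Zn n))
      \<le> (\<integral>\<^sup>+ k. indicator T k \<partial>count_space (Zn n))"
    by (intro nn_integral_mono) (auto simp: indicator_def)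
  also have "\<dots> = of_nat (3 ^ n)"
    using T by (subst nn_integral_count_space'[where A = T]) auto
  finally show ?thesis .
qed

lemma rel_separated_lat_div:
  assumes w: "w > 0"
  shows "rel_separated n (lat_div n w)"
  unfolding rel_separated_def
proof (intro conjI ballI exI[of _ "2 / w"])
  have "(SUP x\<in>Rn n. \<integral>\<^sup>+ k. indicator (cube n (lat_div n w k) (1 / w)) x \<partial>count_space (Zn n))
      \<le> of_nat (3 ^ n)"
    using lattice_cube_count_le[OF w] by (intro SUP_least)
  also have "\<dots> < \<infinity>"
    by (metis ennreal_of_nat_eq_real_of_nat ennreal_less_top infinity_ennreal_def)
  finally show "(SUP x\<in>Rn n. \<integral>\<^sup>+ k. indicator (cube n (lat_div n w k) (2 / w / 2)) x \<partial>count_space (Zn n))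
      < \<infinity>"
    by simp
qed (use w one_le_lattice_cube_count in \<open>auto simp: lat_div_in_Rn\<close>)

lemma sampling_eq_infsum:
  "sampling n w K f x = (\<Sum>\<^sub>\<infinity> k\<in>Zn n. f (lat_div n w k) * K (affine_pt n w (of_int_pt k) x))"
  by (simp add: sampling_def pt_minus_pt_scale)

lemma sampling_borel_measurable:
  assumes K: "K \<in> borel_measurable (lebesgue_n n)" and w: "w > 0"
    and f: "\<And>x. x \<in> Rn n \<Longrightarrow> \<bar>f x\<bar> \<le> B" and M: "abs_moment n 0 K < \<infinity>"
  shows "sampling n w K f \<in> borel_measurable (lebesgue_n n)"
proof -
  define g where "g x k = f (lat_div n w k) * K (affine_pt n w (of_int_pt k) x)" for x k
  have g_meas: "(\<lambda>x. g x k) \<in> borel_measurable (lebesgue_n n)" for k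
    using measurable_comp[OF measurable_lebesgue_n_affine_pt[OF w] K] by (simp add: g_def comp_def)
  have summable: "(\<integral>\<^sup>+ k. ennreal \<bar>g x k\<bar> \<partial>count_space (Zn n)) < \<infinity>" for x
  proof -
    have "(\<integral>\<^sup>+ k. ennreal \<bar>g x k\<bar> \<partial>count_space (Zn n))
        \<le> (\<integral>\<^sup>+ k. ennreal (max B 0) * ennreal \<bar>K (affine_pt n 1 (of_int_pt k) (affine_pt n w (\<lambda>_. 0) x))\<bar>
              \<partial>count_space (Zn n))"
      using f[OF lat_div_in_Rn]
      by (intro nn_integral_mono)
         (auto simp: g_def abs_mult affine_pt_shift_scale ennreal_mult''[symmetric] le_max_iff_disj
           intro!: ennreal_leI mult_right_mono)
    also have "\<dots> \<le> ennreal (max B 0) * abs_moment n 0 K"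
      unfolding abs_moment_0_eq by (subst nn_integral_cmult) (auto intro!: mult_left_mono SUP_upper)
    also have "\<dots> < \<infinity>"
      using M by (simp add: ennreal_mult_less_top)
    finally show ?thesis .
  qed
  have "sampling n w K f = (\<lambda>x. enn2real (\<integral>\<^sup>+ k. ennreal (g x k) \<partial>count_space (Zn n))
        - enn2real (\<integral>\<^sup>+ k. ennreal (- g x k) \<partial>count_space (Zn n)))"
    using infsum_eq_nn_integral_diff[OF summable] by (simp add: sampling_eq_infsum g_def fun_eq_iff)
  also have "\<dots> \<in> borel_measurable (lebesgue_n n)"
    using g_meas by (intro borel_measurable_diff borel_measurable_enn2real borel_measurable_nn_integral_count_space
        countable_Zn) auto
  finally show ?thesis .
qed

lemma mixnorm_sampling_le:
  assumes K: "K \<in> borel_measurable (lebesgue_n n)" and M: "abs_moment n 0 K < \<infinity>" and w: "w > 0"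
    and P0: "1 \<le> P 0" and P_mono: "\<And>i. Suc i < n \<Longrightarrow> P i \<le> P (Suc i)" and n: "n \<ge> 1"
  shows "mixnorm n P (sampling n w K f)
    \<le> epowr (abs_moment n 0 K) (1 - 1 / P (n - 1)) * epowr (L1norm n K) (1 / P (n - 1))
      * seqnorm n P w (\<lambda>k. f (lat_div n w k))"
proof -
  obtain G where G: "G \<in> borel_measurable (lborel_n n)"
    and G_K: "AE u in lborel_n n. G u = ennreal \<bar>K u\<bar>"
    and per: "\<And>u. u \<in> Rn n \<Longrightarrow> (\<integral>\<^sup>+ k. G (affine_pt n 1 (of_int_pt k) u) \<partial>count_space (Zn n)) \<le> abs_moment n 0 K"
    using borel_abs_kernel_periodization_le[OF K] by blast
  define b where "b = (\<lambda>k. ennreal \<bar>f (lat_div n w k)\<bar>)"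
  define z where "z = restrict (\<lambda>_. 0::real) {..<n}"
  obtain N where N: "N \<in> null_sets (lborel_n n)" and G_eq: "\<And>u. u \<in> Rn n \<Longrightarrow> u \<notin> N \<Longrightarrow> G u = ennreal \<bar>K u\<bar>"
    using G_K by (force elim!: AE_E simp: null_sets_def space_lborel_n)
  have "AE x in lborel_n n. ennreal \<bar>sampling n w K f x\<bar> \<le> lattice_sum n w b G x"
    using AE_space AE_not_in[OF null_sets_lattice_preimages[OF N w]]
  proof eventually_elim
    case (elim x)
    have "ennreal \<bar>sampling n w K f x\<bar>
        \<le> (\<integral>\<^sup>+ k. ennreal \<bar>f (lat_div n w k) * K (affine_pt n w (of_int_pt k) x)\<bar> \<partial>count_space (Zn n))"
      unfolding sampling_eq_infsum by (rule infsum_abs_le_nn_integral)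
    also have "\<dots> = lattice_sum n w b G x"
      unfolding lattice_sum_def b_def using elim
      by (intro nn_integral_cong) (auto simp: G_eq abs_mult ennreal_mult'' space_lborel_n)
    finally show ?case .
  qed
  then have "mixnorm n P (sampling n w K f) \<le> mixnorm_enn P (lattice_sum n w b G) n z"
    unfolding mixnorm_def mixnorm_aux_eq_mixnorm_enn z_def
    using exponent_ge_one[OF P0 P_mono]
    by (intro mixnorm_enn_mono_AE) (auto simp: Rn_def less_le_trans[OF zero_less_one])
  also have "\<dots> \<le> epowr (abs_moment n 0 K) (1 - 1 / P (n - 1)) * epowr (\<integral>\<^sup>+ y. G y \<partial>lborel_n n) (1 / P (n - 1))
      * seqnorm_enn P w b n (restrict (\<lambda>_. 0) {..<n})"
    using M by (intro mixnorm_enn_lattice_sum_le[OF G per _ w P0 P_mono n]) (auto simp: z_def Rn_def)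
  also have "(\<integral>\<^sup>+ y. G y \<partial>lborel_n n) = L1norm n K"
    unfolding L1norm_def lebesgue_n_def nn_integral_completion using G_K by (rule nn_integral_cong_AE)
  also have "seqnorm_enn P w b n (restrict (\<lambda>_. 0) {..<n}) = seqnorm n P w (\<lambda>k. f (lat_div n w k))"
    by (simp add: seqnorm_def seqnorm_aux_eq_seqnorm_enn b_def)
  finally show ?thesis .
qed

theorem theorem3p4:
  fixes n :: nat and w \<alpha> :: real and P :: "nat \<Rightarrow> real"
    and K f :: "(nat \<Rightarrow> real) \<Rightarrow> real"
  assumes "n \<ge> 1" and "w > 0" and "\<alpha> \<ge> 0"
    and "1 \<le> P 0"
    and "\<And>i. Suc i < n \<Longrightarrow> P i \<le> P (Suc i)"
    and "is_kernel n \<alpha> K"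
    and "Delta n P w f"
  shows "in_LP n P (sampling n w K f) \<and>
         mixnorm n P (sampling n w K f)
           \<le> epowr (abs_moment n 0 K) (1 - 1 / P (n - 1)) * epowr (L1norm n K) (1 / P (n - 1))
             * seqnorm n P w (\<lambda>k. f (lat_div n w k))"
proof -
  note n = assms(1) and w = assms(2) and P = assms(4,5)
  obtain \<delta> B where K_int: "integrable (lebesgue_n n) K" and "\<delta> > 0"
    and K_bdd: "\<And>u. u \<in> Rn n \<Longrightarrow> (\<forall>i<n. \<bar>u i\<bar> < \<delta>) \<Longrightarrow> \<bar>K u\<bar> \<le> B"
    and K_mom: "abs_moment n \<alpha> K < \<infinity>"
    using assms(6) unfolding is_kernel_def by blast
  obtain C where f_bdd: "\<And>x. x \<in> Rn n \<Longrightarrow> \<bar>f x\<bar> \<le> C"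
    and f_seq: "seqnorm n P w (\<lambda>k. f (lat_div n w k)) < \<infinity>"
    using assms(7) rel_separated_lat_div[OF w] unfolding Delta_def by blast
  have K: "K \<in> borel_measurable (lebesgue_n n)"
    using K_int by (rule borel_measurable_integrable)
  have M: "abs_moment n 0 K < \<infinity>"
    using abs_moment_0_finite[OF assms(3) \<open>\<delta> > 0\<close> K_bdd K_mom] .
  have L1: "L1norm n K < \<infinity>"
    using K_int by (simp add: integrable_iff_bounded L1norm_def)
  have bound: "mixnorm n P (sampling n w K f)
      \<le> epowr (abs_moment n 0 K) (1 - 1 / P (n - 1)) * epowr (L1norm n K) (1 / P (n - 1))
        * seqnorm n P w (\<lambda>k. f (lat_div n w k))"
    by (rule mixnorm_sampling_le[OF K M w P n])
  also have "\<dots> < \<infinity>"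
    using epowr_less_top[OF M] epowr_less_top[OF L1] f_seq by (simp add: ennreal_mult_less_top)
  finally show ?thesis
    using bound sampling_borel_measurable[OF K w f_bdd M] by (simp add: in_LP_def)
qed

end
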